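(* Let $s_+,s_-\in\mathbb{R}^2$ be distinct, and let $\mathcal{C}_{s_+,s_-}=\{x\mapsto\mathrm{sign}(w^\top x-b): w\in\mathbb{R}^2,\ b\in\mathbb{R},\ w^\top s_+\ge b> w^\top s_-\}$ be the class of two-dimensional $\{(s_+,+1),(s_-,-1)\}$-halfspaces on $\mathcal{X}=\mathbb{R}^2$. Then $(\mathcal{C}_{s_+,s_-},\mathbb{R}^2)$ has certificate dimension $3$ with parameters $m=7$ and $n=3$.
   Context: $\mathrm{sign}(z)=+1$ if $z\ge0$ and $-1$ if $z<0$. Notation: $\mathcal{L}=\mathcal{X}\times\{\pm1\}$; $\mathcal{P}_n(\mathcal{L})$ = $n$-element subsets of $\mathcal{L}$. For finite $S\subseteq\mathcal{L}$, $\mathcal{V}(S)=\{h\in\mathcal{C}: h(x)=y\ \forall (x,y)\in S\}$ (with $\mathcal{C}$ the class under consideration). A set of labeled examples is "labeled by $h$" if $y=h(x)$ for each of its elements. Certificate dimension: $(\mathcal{C},\mathcal{X})$ has certificate dimension $k$ with parameters $(m,n)$ (integers $m,n\ge1$) if there is a function $\sigma:\mathcal{C}\times\mathcal{P}_{k-1}(\mathcal{L})\to\{0,1,\dots,n-1\}$ such that for every $h\in\mathcal{C}$ and every $S\subseteq\mathcal{L}$ with $|S|=m$ labeled by $h$, there exist $U\subseteq S$ with $|U|=k$ and $(x,y)\in U$ such that for every $h'\in\mathcal{V}(S\setminus\{(x,y)\})$: $\sigma(h',U\setminus\{(x,y)\})=\sigma(h,U\setminus\{(x,y)\})\Rightarrow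 h'(x)=h(x)=y$. *)

theory Defs
  imports "HOL-Analysis.Analysis"
begin

definition sign :: "real \<Rightarrow> int" where
  "sign z = (if z \<ge> 0 then 1 else -1)"

definition labeled_space :: "'x set \<Rightarrow> ('x \<times> int) set" where
  "labeled_space X = X \<times> {1, -1}"

definition labeled_by :: "('x \<Rightarrow> int) \<Rightarrow> ('x \<times> int) set \<Rightarrow> bool" where
  "labeled_by h S \<longleftrightarrow> (\<forall>(x, y)\<in>S. y = h x)"

definition version_space :: "('x \<Rightarrow> int) set \<Rightarrow> ('x \<times> int) set \<Rightarrow> ('x \<Rightarrow> int) set" where
  "version_space C S = {h \<in> C. \<forall>(x, y)\<in>S. h x = y}"

definition has_certificate_dimension ::
  "('x \<Rightarrow> int) set \<Rightarrow> 'x set \<Rightarrow> nat \<Rightarrow> nat \<Rightarrow> nat \<Rightarrow> bool" where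
  "has_certificate_dimension C X k m n \<longleftrightarrow>
     1 \<le> m \<and> 1 \<le> n \<and>
     (\<exists>\<sigma> :: ('x \<Rightarrow> int) \<Rightarrow> ('x \<times> int) set \<Rightarrow> nat.
        (\<forall>h\<in>C. \<forall>U. U \<subseteq> labeled_space X \<and> finite U \<and> card U = k - 1 \<longrightarrow> \<sigma> h U < n) \<and>
        (\<forall>h\<in>C. \<forall>S. S \<subseteq> labeled_space X \<and> finite S \<and> card S = m \<and> labeled_by h S \<longrightarrow>
           (\<exists>U. U \<subseteq> S \<and> card U = k \<and>
              (\<exists>(x, y)\<in>U. \<forall>h'\<in>version_space C (S - {(x, y)}).
                  \<sigma> h' (U - {(x, y)}) = \<sigma> h (U - {(x, y)}) \<longrightarrow> h' x = h x \<and> h x = y))))"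

definition halfspaces2 :: "real^2 \<Rightarrow> real^2 \<Rightarrow> (real^2 \<Rightarrow> int) set" where
  "halfspaces2 sp sm =
     {(\<lambda>x. sign (w \<bullet> x - b)) | w b. w \<bullet> sp \<ge> b \<and> b > w \<bullet> sm}"

end

theory Submission
  imports Defs
begin

text \<open>Write \<open>h x = sign (w \<bullet> x - b)\<close> with \<open>w \<bullet> s\<^sub>+ \<ge> b > w \<bullet> s\<^sub>-\<close>. Among seven
  examples labelled by \<open>h\<close>, four carry the same label \<open>l\<close>; with the anchor \<open>s = s\<^sub>-\<close> for
  \<open>l = 1\<close> and \<open>s = s\<^sub>+\<close> for \<open>l = -1\<close>, they lie in the open half-plane
  \<open>(l w) \<bullet> (q - s) > 0\<close>, and every halfspace of the class gives \<open>s\<close> the label \<open>-l\<close>.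
  Sort the four points by angle around \<open>s\<close>. Either a point lies beyond the segment joining its
  angular neighbours, and any halfspace labelling both neighbours \<open>l\<close> and \<open>s\<close> by \<open>-l\<close>
  labels it \<open>l\<close>; or \<open>s\<close> and the middle points form convex corners, and an outer point lies in
  the wedge opposite the triangle at one of the two middle points. In the second case the label is
  forced as soon as one knows which of the two middle points is further in direction \<open>w\<close>, and
  that comparison is all the three-valued \<open>\<sigma>\<close> records.\<close>

definition cross2 :: "real^2 \<Rightarrow> real^2 \<Rightarrow> real" where
  "cross2 u v = u$1 * v$2 - u$2 * v$1"

lemma inner_real2: "(u::real^2) \<bullet> v = u$1 * v$1 + u$2 * v$2"
  by (simp add: inner_vec_def sum_2)

lemma vec2_eq_iff: "(u::real^2) = v \<longleftrightarrow> u$1 = v$1 \<and> u$2 = v$2"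
  by (simp add: vec_eq_iff forall_2)

lemma cross2_cramer: "cross2 a c *\<^sub>R b = cross2 b c *\<^sub>R a + cross2 a b *\<^sub>R c"
  by (simp add: vec2_eq_iff cross2_def algebra_simps)

lemma cross2_inner_identity:
  "cross2 w v * (w \<bullet> u) - cross2 w u * (w \<bullet> v) = (w \<bullet> w) * cross2 u v"
  by (simp add: inner_real2 cross2_def algebra_simps)

lemma cross2_inner_parallel:
  "(w \<bullet> u) *\<^sub>R v - (w \<bullet> v) *\<^sub>R u = cross2 u v *\<^sub>R (vector [- w$2, w$1] :: real^2)"
  by (simp add: vec2_eq_iff inner_real2 cross2_def algebra_simps vector_def)

text \<open>The tangent of the angle from \<open>w\<close> to \<open>u\<close>: it orders the open half-plane \<open>w \<bullet> u > 0\<close>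
  by angle.\<close>
definition angle_key :: "real^2 \<Rightarrow> real^2 \<Rightarrow> real" where
  "angle_key w u = cross2 w u / (w \<bullet> u)"

lemma angle_key_cross2:
  assumes "w \<bullet> u > 0" "w \<bullet> v > 0"
  shows "(w \<bullet> u) * (w \<bullet> v) * (angle_key w v - angle_key w u) = (w \<bullet> w) * cross2 u v"
  using assms cross2_inner_identity[of w v u]
  by (simp add: angle_key_def field_simps)

lemma cross2_pos_iff_angle_key_less:
  assumes "w \<bullet> u > 0" "w \<bullet> v > 0"
  shows "cross2 u v > 0 \<longleftrightarrow> angle_key w u < angle_key w v"
proof -
  have "w \<noteq> 0" using assms by auto
  then have "w \<bullet> w > 0" by simp
  then have "cross2 u v > 0 \<longleftrightarrow> (w \<bullet> w) * cross2 u v > 0"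
    by (meson mult_pos_pos zero_less_mult_pos)
  also have "\<dots> \<longleftrightarrow> (w \<bullet> u) * (w \<bullet> v) * (angle_key w v - angle_key w u) > 0"
    by (simp only: angle_key_cross2[OF assms])
  also have "\<dots> \<longleftrightarrow> angle_key w v - angle_key w u > 0"
    using assms by (meson mult_pos_pos zero_less_mult_pos)
  finally show ?thesis by simp
qed

lemma angle_key_eq_imp_parallel:
  assumes "w \<bullet> u > 0" "w \<bullet> v > 0" "angle_key w u = angle_key w v"
  shows "(w \<bullet> u) *\<^sub>R v = (w \<bullet> v) *\<^sub>R u"
proof -
  have "w \<noteq> 0" using assms by auto
  then have "w \<bullet> w > 0" by simp
  then have "cross2 u v = 0" using angle_key_cross2[OF assms(1,2)] assms(3) by simp
  then show ?thesis using cross2_inner_parallel[of w u v] by simp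
qed

text \<open>\<open>beyond_segment s a c x\<close>: \<open>x\<close> lies in the cone at \<open>s\<close> spanned by \<open>a\<close> and \<open>c\<close>, on the
  far side of the segment \<open>[a, c]\<close>. \<open>opposite_wedge s a c x\<close>: \<open>x\<close> lies in the angle at \<open>a\<close>
  vertically opposite to the angle of the triangle \<open>s a c\<close>.\<close>
definition beyond_segment :: "real^2 \<Rightarrow> real^2 \<Rightarrow> real^2 \<Rightarrow> real^2 \<Rightarrow> bool" where
  "beyond_segment s a c x \<longleftrightarrow>
     (\<exists>\<alpha> \<gamma>. 0 \<le> \<alpha> \<and> 0 \<le> \<gamma> \<and> 1 \<le> \<alpha> + \<gamma> \<and> x - s = \<alpha> *\<^sub>R (a - s) + \<gamma> *\<^sub>R (c - s))"

definition opposite_wedge :: "real^2 \<Rightarrow> real^2 \<Rightarrow> real^2 \<Rightarrow> real^2 \<Rightarrow> bool" where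
  "opposite_wedge s a c x \<longleftrightarrow>
     (\<exists>\<beta> \<mu>. 0 \<le> \<beta> \<and> 0 \<le> \<mu> \<and> x - a = \<beta> *\<^sub>R (a - s) + \<mu> *\<^sub>R (a - c))"

definition certifies :: "real^2 \<Rightarrow> real^2 \<Rightarrow> real^2 \<Rightarrow> real^2 \<Rightarrow> real^2 \<Rightarrow> bool" where
  "certifies w s a c x \<longleftrightarrow> beyond_segment s a c x \<or> opposite_wedge s a c x \<and> 0 \<le> w \<bullet> (a - c)"

lemma scaleR_cancel_combination:
  fixes y u v :: "'a::real_vector"
  assumes "t > 0" "t *\<^sub>R y = p *\<^sub>R u + q *\<^sub>R v"
  shows "y = (p / t) *\<^sub>R u + (q / t) *\<^sub>R v"
proof -
  have "y = (1 / t) *\<^sub>R (t *\<^sub>R y)" using assms(1) by simp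
  then show ?thesis unfolding assms(2) by (simp add: scaleR_add_right)
qed

lemma parallel_beyond_segment:
  assumes "0 < du" "du \<le> dv" "du *\<^sub>R (v - s) = dv *\<^sub>R (u - s)"
  shows "beyond_segment s u c v"
proof -
  have "v - s = (dv / du) *\<^sub>R (u - s) + (0 / du) *\<^sub>R (c - s)"
    using scaleR_cancel_combination[of du "v - s" dv "u - s" 0 "c - s"] assms by simp
  then show ?thesis
    unfolding beyond_segment_def using assms by (intro exI[of _ "dv / du"] exI[of _ 0]) simp
qed

lemma angular_triple_cases:
  assumes ab: "cross2 (a - s) (b - s) > 0" and bc: "cross2 (b - s) (c - s) > 0"
    and ac: "cross2 (a - s) (c - s) > 0"
  shows "beyond_segment s a c b \<or> opposite_wedge s b a c \<and> opposite_wedge s b c a"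
proof (cases "cross2 (a - s) (c - s) \<le> cross2 (a - s) (b - s) + cross2 (b - s) (c - s)")
  case True
  have "b - s = (cross2 (b - s) (c - s) / cross2 (a - s) (c - s)) *\<^sub>R (a - s)
              + (cross2 (a - s) (b - s) / cross2 (a - s) (c - s)) *\<^sub>R (c - s)"
    using scaleR_cancel_combination[OF ac cross2_cramer] .
  moreover have "1 \<le> cross2 (b - s) (c - s) / cross2 (a - s) (c - s)
                     + cross2 (a - s) (b - s) / cross2 (a - s) (c - s)"
    using True ac by (simp add: field_simps)
  ultimately show ?thesis
    unfolding beyond_segment_def using ab bc ac by (intro disjI1 exI conjI) auto
next
  case False
  define gap where "gap = cross2 (a - s) (c - s) - cross2 (a - s) (b - s) - cross2 (b - s) (c - s)"
  have gap: "0 \<le> gap" using False by (simp add: gap_def)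
  have "cross2 (a - s) (b - s) *\<^sub>R (c - b) = gap *\<^sub>R (b - s) + cross2 (b - s) (c - s) *\<^sub>R (b - a)"
    unfolding gap_def by (simp add: vec2_eq_iff cross2_def algebra_simps)
  then have "c - b = (gap / cross2 (a - s) (b - s)) *\<^sub>R (b - s)
                   + (cross2 (b - s) (c - s) / cross2 (a - s) (b - s)) *\<^sub>R (b - a)"
    by (rule scaleR_cancel_combination[OF ab])
  then have "opposite_wedge s b a c"
    unfolding opposite_wedge_def using gap ab bc by (intro exI conjI) auto
  moreover
  have "cross2 (b - s) (c - s) *\<^sub>R (a - b) = gap *\<^sub>R (b - s) + cross2 (a - s) (b - s) *\<^sub>R (b - c)"
    unfolding gap_def by (simp add: vec2_eq_iff cross2_def algebra_simps)
  then have "a - b = (gap / cross2 (b - s) (c - s)) *\<^sub>R (b - s)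
                   + (cross2 (a - s) (b - s) / cross2 (b - s) (c - s)) *\<^sub>R (b - c)"
    by (rule scaleR_cancel_combination[OF bc])
  then have "opposite_wedge s b c a"
    unfolding opposite_wedge_def using gap ab bc by (intro exI conjI) auto
  ultimately show ?thesis by blast
qed

lemma card4_sorted_by_key:
  fixes k :: "'a \<Rightarrow> 'b::linorder"
  assumes "card P = 4" "inj_on k P"
  obtains q1 q2 q3 q4 where "P = {q1, q2, q3, q4}" "k q1 < k q2" "k q2 < k q3" "k q3 < k q4"
proof -
  have "finite P" using assms(1) by (simp add: card_ge_0_finite)
  then obtain xs where xs: "set xs = P" "distinct xs" using finite_distinct_list by blast
  define ys where "ys = sort_key k xs"
  have ys: "set ys = P" "length ys = 4"
    using xs assms(1) distinct_card[of ys] by (simp_all add: ys_def)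
  have "sorted_wrt (<) (map k ys)"
    using xs assms(2) by (simp add: ys_def strict_sorted_iff distinct_map)
  moreover obtain q1 q2 q3 q4 where "ys = [q1, q2, q3, q4]"
    using ys(2) by (auto simp: length_Suc_conv numeral_eq_Suc)
  ultimately show ?thesis using that ys(1) by auto
qed

lemma sorted_quadruple_certificate:
  assumes pos: "\<forall>q\<in>{q1, q2, q3, q4}. w \<bullet> (q - s) > 0"
    and sorted: "angle_key w (q1 - s) < angle_key w (q2 - s)"
      "angle_key w (q2 - s) < angle_key w (q3 - s)" "angle_key w (q3 - s) < angle_key w (q4 - s)"
  shows "certifies w s q1 q3 q2 \<or> certifies w s q2 q4 q3 \<or>
         certifies w s q3 q2 q4 \<or> certifies w s q2 q3 q1"
proof -
  have cross_pos: "cross2 (a - s) (b - s) > 0"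
    if "a \<in> {q1, q2, q3, q4}" "b \<in> {q1, q2, q3, q4}" "angle_key w (a - s) < angle_key w (b - s)"
    for a b
    using cross2_pos_iff_angle_key_less pos that by blast
  have "beyond_segment s q1 q3 q2 \<or> opposite_wedge s q2 q3 q1"
    using angular_triple_cases[OF cross_pos cross_pos cross_pos] sorted
    by (meson insertCI order.strict_trans)
  moreover have "beyond_segment s q2 q4 q3 \<or> opposite_wedge s q3 q2 q4"
    using angular_triple_cases[OF cross_pos cross_pos cross_pos] sorted
    by (meson insertCI order.strict_trans)
  moreover have "0 \<le> w \<bullet> (q3 - q2) \<or> 0 \<le> w \<bullet> (q2 - q3)"
    unfolding inner_diff_right by linarith
  ultimately show ?thesis unfolding certifies_def by blast
qed

lemma four_points_certificate:
  assumes card: "card P = 4" and pos: "\<forall>q\<in>P. w \<bullet> (q - s) > 0"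
  shows "\<exists>x\<in>P. \<exists>a\<in>P. \<exists>c\<in>P. distinct [x, a, c] \<and> certifies w s a c x"
proof -
  have witness: ?thesis
    if "x \<in> P" "a \<in> P" "c \<in> P" "x \<noteq> a" "x \<noteq> c" "a \<noteq> c" "certifies w s a c x" for x a c
    using that by auto
  show ?thesis
  proof (cases "inj_on (\<lambda>q. angle_key w (q - s)) P")
    case False
    then obtain u v where uv: "u \<in> P" "v \<in> P" "u \<noteq> v"
      and same_key: "angle_key w (u - s) = angle_key w (v - s)"
      unfolding inj_on_def by blast
    have du: "w \<bullet> (u - s) > 0" and dv: "w \<bullet> (v - s) > 0" using pos uv by auto
    have parallel: "(w \<bullet> (u - s)) *\<^sub>R (v - s) = (w \<bullet> (v - s)) *\<^sub>R (u - s)"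
      by (rule angle_key_eq_imp_parallel[OF du dv same_key])
    have "card (P - {u, v}) = 2" using card uv by (simp add: card_Diff_subset card_ge_0_finite)
    then obtain c where c: "c \<in> P" "c \<noteq> u" "c \<noteq> v"
      by (metis Diff_iff card_2_iff insertCI)
    show ?thesis
    proof (cases "w \<bullet> (u - s) \<le> w \<bullet> (v - s)")
      case True
      then have "certifies w s u c v"
        unfolding certifies_def using parallel_beyond_segment[OF du True parallel] by blast
      then show ?thesis using witness uv c by blast
    next
      case False
      then have "certifies w s v c u"
        unfolding certifies_def using parallel_beyond_segment[OF dv _ parallel[symmetric]] by simp
      then show ?thesis using witness uv c by blast
    qed
  next
    case True
    then obtain q1 q2 q3 q4 where q: "P = {q1, q2, q3, q4}" and
      sorted: "angle_key w (q1 - s) < angle_key w (q2 - s)"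
        "angle_key w (q2 - s) < angle_key w (q3 - s)" "angle_key w (q3 - s) < angle_key w (q4 - s)"
      using card4_sorted_by_key card by blast
    have inP: "q1 \<in> P" "q2 \<in> P" "q3 \<in> P" "q4 \<in> P" using q by auto
    consider "certifies w s q1 q3 q2" | "certifies w s q2 q4 q3"
      | "certifies w s q3 q2 q4" | "certifies w s q2 q3 q1"
      using sorted_quadruple_certificate[OF pos[unfolded q] sorted] by blast
    then show ?thesis
      using witness[of q2 q1 q3] witness[of q3 q2 q4] witness[of q4 q3 q2] witness[of q1 q2 q3]
        inP sorted
      by cases force+
  qed
qed

lemma beyond_segment_forces:
  assumes "beyond_segment s a c x" "v \<bullet> s \<le> v \<bullet> a" "v \<bullet> s \<le> v \<bullet> c"
  shows "min (v \<bullet> a) (v \<bullet> c) \<le> v \<bullet> x"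
proof -
  obtain \<alpha> \<gamma> where \<alpha>\<gamma>: "0 \<le> \<alpha>" "0 \<le> \<gamma>" "1 \<le> \<alpha> + \<gamma>"
    and x: "x - s = \<alpha> *\<^sub>R (a - s) + \<gamma> *\<^sub>R (c - s)"
    using assms(1) unfolding beyond_segment_def by blast
  define m where "m = min (v \<bullet> a) (v \<bullet> c) - v \<bullet> s"
  have m: "0 \<le> m" "m \<le> v \<bullet> a - v \<bullet> s" "m \<le> v \<bullet> c - v \<bullet> s"
    using assms(2,3) by (auto simp: m_def)
  have "v \<bullet> x - v \<bullet> s = \<alpha> * (v \<bullet> a - v \<bullet> s) + \<gamma> * (v \<bullet> c - v \<bullet> s)"
    using arg_cong[OF x, of "inner v"] by (simp add: inner_diff_right inner_add_right)
  also have "\<dots> \<ge> (\<alpha> + \<gamma>) * m"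
    using \<alpha>\<gamma> m by (simp add: distrib_right add_mono mult_left_mono)
  also have "(\<alpha> + \<gamma>) * m \<ge> m"
    using \<alpha>\<gamma> m by (simp add: mult_le_cancel_right1)
  finally show ?thesis by (simp add: m_def)
qed

lemma opposite_wedge_forces:
  assumes "opposite_wedge s a c x" "v \<bullet> s \<le> v \<bullet> a" "v \<bullet> c \<le> v \<bullet> a"
  shows "v \<bullet> a \<le> v \<bullet> x"
proof -
  obtain \<beta> \<mu> where \<beta>\<mu>: "0 \<le> \<beta>" "0 \<le> \<mu>" and x: "x - a = \<beta> *\<^sub>R (a - s) + \<mu> *\<^sub>R (a - c)"
    using assms(1) unfolding opposite_wedge_def by blast
  have "v \<bullet> x - v \<bullet> a = \<beta> * (v \<bullet> a - v \<bullet> s) + \<mu> * (v \<bullet> a - v \<bullet> c)"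
    using arg_cong[OF x, of "inner v"] by (simp add: inner_diff_right inner_add_right)
  also have "\<dots> \<ge> 0" using \<beta>\<mu> assms(2,3) by simp
  finally show ?thesis by simp
qed

lemma certifies_forces:
  assumes "certifies w s a c x" "v \<bullet> s \<le> v \<bullet> a" "v \<bullet> s \<le> v \<bullet> c"
    and "0 \<le> w \<bullet> (a - c) \<Longrightarrow> 0 \<le> v \<bullet> (a - c)"
  shows "v \<bullet> a \<le> v \<bullet> x \<or> v \<bullet> c \<le> v \<bullet> x"
  using assms beyond_segment_forces[of s a c x v] opposite_wedge_forces[of s a c x v]
  unfolding certifies_def by (force simp: inner_diff_right)

text \<open>The certificate function \<open>\<sigma>\<close> reads off the sign of \<open>w \<bullet> (a - c)\<close> for a pair \<open>{a, c}\<close>,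
  ordered lexicographically so that the code does not depend on the enumeration of the pair.\<close>
definition lex_less :: "real^2 \<Rightarrow> real^2 \<Rightarrow> bool" where
  "lex_less a c \<longleftrightarrow> a$1 < c$1 \<or> a$1 = c$1 \<and> a$2 < c$2"

definition orientation_code :: "real^2 \<Rightarrow> ((real^2) \<times> int) set \<Rightarrow> nat" where
  "orientation_code w U =
     (if \<exists>p\<in>U. \<exists>q\<in>U. lex_less (fst p) (fst q) \<and> w \<bullet> fst p < w \<bullet> fst q then 0
      else if \<exists>p\<in>U. \<exists>q\<in>U. lex_less (fst p) (fst q) \<and> w \<bullet> fst q < w \<bullet> fst p then 1
      else 2)"

lemma lex_less_cases: "a \<noteq> c \<Longrightarrow> lex_less a c \<or> lex_less c a"
  unfolding lex_less_def vec2_eq_iff by linarith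

lemma orientation_code_pair:
  assumes "lex_less a c"
  shows "orientation_code w {(a, y), (c, z)} = (if w \<bullet> a < w \<bullet> c then 0 else if w \<bullet> c < w \<bullet> a then 1 else 2)"
proof -
  have "\<not> lex_less c a" "\<not> lex_less a a" "\<not> lex_less c c"
    using assms unfolding lex_less_def by auto
  then show ?thesis unfolding orientation_code_def using assms by auto
qed

lemma orientation_code_eq_imp_sgn_eq:
  assumes "a \<noteq> c" "orientation_code w {(a, y), (c, z)} = orientation_code w' {(a, y), (c, z)}"
  shows "sgn (w \<bullet> (a - c)) = sgn (w' \<bullet> (a - c))"
proof (cases "lex_less a c")
  case True
  then show ?thesis
    using assms(2) unfolding orientation_code_pair[OF True]
    by (auto simp: inner_diff_right sgn_if split: if_splits)
next
  case False
  then have ca: "lex_less c a" using lex_less_cases assms(1) by blast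
  have "orientation_code w {(c, z), (a, y)} = orientation_code w' {(c, z), (a, y)}"
    using assms(2) by (simp add: insert_commute)
  then show ?thesis
    unfolding orientation_code_pair[OF ca]
    by (auto simp: inner_diff_right sgn_if split: if_splits)
qed

lemma sgn_eq_imp_mult_nonneg:
  fixes p q t :: real
  assumes "sgn p = sgn q" "0 \<le> t * p"
  shows "0 \<le> t * q"
  using assms by (auto simp: zero_le_mult_iff sgn_if split: if_splits)

definition halfspace_normal :: "real^2 \<Rightarrow> real^2 \<Rightarrow> (real^2 \<Rightarrow> int) \<Rightarrow> real^2" where
  "halfspace_normal sp sm h = (SOME w. \<exists>b. b \<le> w \<bullet> sp \<and> w \<bullet> sm < b \<and> h = (\<lambda>x. sign (w \<bullet> x - b)))"

lemma halfspace_normal_offset: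
  assumes "h \<in> halfspaces2 sp sm"
  obtains b where "b \<le> halfspace_normal sp sm h \<bullet> sp" "halfspace_normal sp sm h \<bullet> sm < b"
    "\<And>x. h x = sign (halfspace_normal sp sm h \<bullet> x - b)"
proof -
  have "\<exists>w b. b \<le> w \<bullet> sp \<and> w \<bullet> sm < b \<and> h = (\<lambda>x. sign (w \<bullet> x - b))"
    using assms unfolding halfspaces2_def by auto
  then show ?thesis
    using that someI_ex[of "\<lambda>w. \<exists>b. b \<le> w \<bullet> sp \<and> w \<bullet> sm < b \<and> h = (\<lambda>x. sign (w \<bullet> x - b))"]
    unfolding halfspace_normal_def by (metis (no_types, lifting))
qed

lemma label_anchor_side:
  assumes "h \<in> halfspaces2 sp sm" "h q = l"
  shows "0 < (of_int l *\<^sub>R halfspace_normal sp sm h) \<bullet> (q - (if l = 1 then sm else sp))"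
proof -
  obtain b where b: "b \<le> halfspace_normal sp sm h \<bullet> sp" "halfspace_normal sp sm h \<bullet> sm < b"
    and h: "\<And>x. h x = sign (halfspace_normal sp sm h \<bullet> x - b)"
    using halfspace_normal_offset[OF assms(1)] by blast
  show ?thesis
  proof (cases "b \<le> halfspace_normal sp sm h \<bullet> q")
    case True
    then have "l = 1" using assms(2) h[of q] by (simp add: sign_def)
    then show ?thesis using True b by (simp add: inner_diff_right)
  next
    case False
    then have "l = -1" using assms(2) h[of q] by (simp add: sign_def)
    then show ?thesis using False b by (simp add: inner_diff_right)
  qed
qed

lemma label_propagates:
  assumes "h \<in> halfspaces2 sp sm" "h a = l"
    and "(of_int l *\<^sub>R halfspace_normal sp sm h) \<bullet> a \<le> (of_int l *\<^sub>R halfspace_normal sp sm h) \<bullet> x"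
  shows "h x = l"
proof -
  obtain b where h: "\<And>x. h x = sign (halfspace_normal sp sm h \<bullet> x - b)"
    using halfspace_normal_offset[OF assms(1)] by blast
  show ?thesis
  proof (cases "b \<le> halfspace_normal sp sm h \<bullet> a")
    case True
    then have "l = 1" using assms(2) h[of a] by (simp add: sign_def)
    then show ?thesis using True assms(3) h[of x] by (simp add: sign_def)
  next
    case False
    then have "l = -1" using assms(2) h[of a] by (simp add: sign_def)
    then show ?thesis using False assms(3) h[of x] by (simp add: sign_def)
  qed
qed

definition halfspace_code :: "real^2 \<Rightarrow> real^2 \<Rightarrow> (real^2 \<Rightarrow> int) \<Rightarrow> ((real^2) \<times> int) set \<Rightarrow> nat" where
  "halfspace_code sp sm h = orientation_code (halfspace_normal sp sm h)"

lemma halfspace_code_less_3: "halfspace_code sp sm h U < 3"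
  by (simp add: halfspace_code_def orientation_code_def)

lemma certified_label_forced:
  assumes h: "h \<in> halfspaces2 sp sm" and h': "h' \<in> halfspaces2 sp sm"
    and labels: "h' a = l" "h' c = l" and "a \<noteq> c"
    and code: "halfspace_code sp sm h' {(a, l), (c, l)} = halfspace_code sp sm h {(a, l), (c, l)}"
    and cert: "certifies (of_int l *\<^sub>R halfspace_normal sp sm h) (if l = 1 then sm else sp) a c x"
  shows "h' x = l"
proof -
  define v where "v = of_int l *\<^sub>R halfspace_normal sp sm h'"
  note same_sgn = orientation_code_eq_imp_sgn_eq[OF \<open>a \<noteq> c\<close> code[unfolded halfspace_code_def]]
  have orientation: "0 \<le> v \<bullet> (a - c)"
    if "0 \<le> (of_int l *\<^sub>R halfspace_normal sp sm h) \<bullet> (a - c)"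
    using that sgn_eq_imp_mult_nonneg[OF same_sgn[symmetric]] unfolding v_def by simp
  have "v \<bullet> (if l = 1 then sm else sp) \<le> v \<bullet> a" "v \<bullet> (if l = 1 then sm else sp) \<le> v \<bullet> c"
    using label_anchor_side[OF h' labels(1)] label_anchor_side[OF h' labels(2)]
    unfolding v_def by (simp_all add: inner_diff_right)
  then have "v \<bullet> a \<le> v \<bullet> x \<or> v \<bullet> c \<le> v \<bullet> x"
    using certifies_forces[OF cert _ _ orientation] by blast
  then show "h' x = l"
    using label_propagates[OF h'] labels unfolding v_def by blast
qed

lemma label_class_points:
  assumes "n \<le> card {p \<in> S. snd p = l}"
  obtains P where "card P = n" "\<And>q. q \<in> P \<Longrightarrow> (q, l) \<in> S"
proof -
  obtain T where T: "T \<subseteq> {p \<in> S. snd p = l}" "card T = n"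
    using obtain_subset_with_card_n[OF assms] by blast
  have "inj_on fst T"
  proof (rule inj_onI)
    fix p q assume "p \<in> T" "q \<in> T" "fst p = fst q"
    moreover have "snd p = snd q" using T(1) \<open>p \<in> T\<close> \<open>q \<in> T\<close> by auto
    ultimately show "p = q" by (simp add: prod_eq_iff)
  qed
  then have "card (fst ` T) = n" using T(2) by (simp add: card_image)
  moreover have "(q, l) \<in> S" if "q \<in> fst ` T" for q
    using that T(1) by force
  ultimately show ?thesis using that by blast
qed

lemma certificate_from_label_class:
  assumes h: "h \<in> halfspaces2 sp sm" and S: "labeled_by h S"
    and majority: "4 \<le> card {p \<in> S. snd p = l}"
  shows "\<exists>U. U \<subseteq> S \<and> card U = 3 \<and>
           (\<exists>(x, y)\<in>U. \<forall>h'\<in>version_space (halfspaces2 sp sm) (S - {(x, y)}).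
              halfspace_code sp sm h' (U - {(x, y)}) = halfspace_code sp sm h (U - {(x, y)}) \<longrightarrow>
              h' x = h x \<and> h x = y)"
proof -
  obtain P where card_P: "card P = 4" and in_S: "\<And>q. q \<in> P \<Longrightarrow> (q, l) \<in> S"
    using label_class_points[OF majority] by blast
  have h_P: "h q = l" if "q \<in> P" for q
    using S in_S[OF that] unfolding labeled_by_def by auto
  have "\<forall>q\<in>P. (of_int l *\<^sub>R halfspace_normal sp sm h) \<bullet> (q - (if l = 1 then sm else sp)) > 0"
    using label_anchor_side[OF h] h_P by blast
  then obtain x a c where xac: "x \<in> P" "a \<in> P" "c \<in> P" "distinct [x, a, c]"
    and cert: "certifies (of_int l *\<^sub>R halfspace_normal sp sm h) (if l = 1 then sm else sp) a c x"
    using four_points_certificate[OF card_P] by blast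
  define U where "U = {(x, l), (a, l), (c, l)}"
  have U_x: "U - {(x, l)} = {(a, l), (c, l)}" using xac(4) by (auto simp: U_def)
  have forced: "h' x = l"
    if h': "h' \<in> version_space (halfspaces2 sp sm) (S - {(x, l)})"
    and code: "halfspace_code sp sm h' {(a, l), (c, l)} = halfspace_code sp sm h {(a, l), (c, l)}"
    for h'
  proof -
    have h'_C: "h' \<in> halfspaces2 sp sm" and agree: "\<forall>(z, y)\<in>S - {(x, l)}. h' z = y"
      using h' unfolding version_space_def by auto
    have "(a, l) \<in> S - {(x, l)}" "(c, l) \<in> S - {(x, l)}" using in_S xac by auto
    then have "h' a = l" "h' c = l" using bspec[OF agree] by fastforce+
    moreover have "a \<noteq> c" using xac(4) by simp
    ultimately show ?thesis using certified_label_forced[OF h h'_C _ _ _ code cert] by blast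
  qed
  then have "\<forall>h'\<in>version_space (halfspaces2 sp sm) (S - {(x, l)}).
      halfspace_code sp sm h' (U - {(x, l)}) = halfspace_code sp sm h (U - {(x, l)}) \<longrightarrow>
      h' x = h x \<and> h x = l"
    using h_P[OF xac(1)] unfolding U_x by simp
  moreover have "(x, l) \<in> U" "U \<subseteq> S" "card U = 3" using in_S xac by (auto simp: U_def)
  ultimately show ?thesis by blast
qed

lemma label_class_majority:
  assumes "finite S" "S \<subseteq> labeled_space X"
  shows "\<exists>l. card S \<le> 2 * card {p \<in> S. snd p = l}"
proof -
  have "S = {p \<in> S. snd p = 1} \<union> {p \<in> S. snd p = -1}"
    using assms(2) unfolding labeled_space_def by auto
  also have "card \<dots> = card {p \<in> S. snd p = 1} + card {p \<in> S. snd p = -1}"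
    by (rule card_Un_disjoint) (use assms(1) in auto)
  finally have card_S: "card S = card {p \<in> S. snd p = 1} + card {p \<in> S. snd p = -1}" .
  show ?thesis
  proof (cases "card {p \<in> S. snd p = -1} \<le> card {p \<in> S. snd p = 1}")
    case True
    then show ?thesis using card_S by (intro exI[of _ 1]) simp
  next
    case False
    then show ?thesis using card_S by (intro exI[of _ "-1"]) simp
  qed
qed

theorem lemmaD1:
  fixes sp sm :: "real^2"
  assumes "sp \<noteq> sm"
  shows "has_certificate_dimension (halfspaces2 sp sm) UNIV 3 7 3"
proof -
  have "\<exists>U. U \<subseteq> S \<and> card U = 3 \<and>
           (\<exists>(x, y)\<in>U. \<forall>h'\<in>version_space (halfspaces2 sp sm) (S - {(x, y)}).
              halfspace_code sp sm h' (U - {(x, y)}) = halfspace_code sp sm h (U - {(x, y)}) \<longrightarrow>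
              h' x = h x \<and> h x = y)"
    if hS: "h \<in> halfspaces2 sp sm" "S \<subseteq> labeled_space UNIV" "finite S" "card S = 7"
      "labeled_by h S"
    for h S
  proof -
    obtain l where "card S \<le> 2 * card {p \<in> S. snd p = l}"
      using label_class_majority hS(2,3) by blast
    then have "4 \<le> card {p \<in> S. snd p = l}" using hS(4) by simp
    then show ?thesis using certificate_from_label_class hS(1,5) by blast
  qed
  then show ?thesis
    unfolding has_certificate_dimension_def
    by (intro conjI exI[of _ "halfspace_code sp sm"]) (auto simp: halfspace_code_less_3)
qed

end
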